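(* Let $H_{ij}$, $i=1,\ldots,b$, $j=1,\ldots,s_i$, be $n=\sum_i s_i$ null hypotheses with $p$-values $P_{ij}$, where true-null $p$-values are $U(0,1)$, the rows $(P_{i1},\ldots,P_{is_i})$ are mutually independent across $i$, and within each row $i$ the $p$-values are positively dependent in the sense that for every true-null $p$-value $P_{ij}$ and every coordinatewise non-decreasing function $\phi_i$, $E\{\phi_i(P_{i1},\ldots,P_{is_i})\mid P_{ij}\le u\}$ is non-decreasing in $u\in(0,1)$. Let $\widehat n_0(\mathbf P)>0$ be an estimator satisfying Property 1, fix $\alpha\in(0,1)$, and apply the adaptive BH method: (1) set $\widehat\pi_0=\widehat n_0/n$ and $Q_{ij}=\widehat\pi_0P_{ij}$; (2) with $\tilde P_i=\bar s\min_{1\le j\le s_i}P_{ij}$, $\bar s=n/b$, ordered as $\tilde P_{(1)}\le\cdots\le\tilde P_{(b)}$, and $\tilde Q_{(i)}=\widehat\pi_0\tilde P_{(i)}$, $\tilde Q_i=\widehat\pi_0\tilde P_i$, let $B^*=\max\{1\le i\le b:\tilde Q_{(i)}\le i\alpha/b\}$; (3) if this maximum exists, reject $H_{ij}$ for all $(i,j)$ with $\tilde Q_i\le\tilde Q_{(B^* )}$ and $Q_{ij}\le B^*\alpha/n$, otherwise reject nothing. Then the false discovery rate of this method is at most $\alpha$.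
   Context: $H_{ij}=0$ means $H_{ij}$ is true. FDR $=E(V/\max\{R,1\})$ with $V$ the number of rejected true nulls and $R$ the number of rejections. $\mathbf P=((P_{ij}))$; $\mathbf P^{(-i)}$ is $\mathbf P$ with row $i$ deleted, and $\widehat n_0(\mathbf P^{(-i)},\mathbf 0)$ is $\widehat n_0(\mathbf P)$ with the entries of row $i$ replaced by $0$. $E_{DU}$ denotes expectation under the Dirac-uniform configuration of $\mathbf P^{(-i)}$: $p$-values of false nulls set to $0$, the others $U(0,1)$, rows independent. Property 1: $\widehat n_0(\mathbf P)$ is non-decreasing in each $P_{ij}$ and $\sum_{i=1}^b\sum_{j=1}^{s_i}I(H_{ij}=0)E_{DU}\{1/\widehat n_0(\mathbf P^{(-i)},\mathbf 0)\}\le1$. *)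

theory Defs
  imports "HOL-Probability.Probability"
begin

(* Index set of the hypotheses H_{ij}: rows i = 0..b-1, columns j = 0..s i - 1
   (0-based versions of i = 1..b, j = 1..s_i). *)
definition idx :: "nat \<Rightarrow> (nat \<Rightarrow> nat) \<Rightarrow> (nat \<times> nat) set" where
  "idx b s = (SIGMA i:{..<b}. {..<s i})"

definition ntot :: "nat \<Rightarrow> (nat \<Rightarrow> nat) \<Rightarrow> nat" where
  "ntot b s = (\<Sum>i<b. s i)"

definition pmat :: "nat \<Rightarrow> (nat \<Rightarrow> nat) \<Rightarrow> (nat \<Rightarrow> nat \<Rightarrow> 'a \<Rightarrow> real) \<Rightarrow> 'a \<Rightarrow> (nat \<times> nat \<Rightarrow> real)" where
  "pmat b s P w = restrict (\<lambda>(i,j). P i j w) (idx b s)"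

definition prow :: "(nat \<Rightarrow> nat) \<Rightarrow> (nat \<Rightarrow> nat \<Rightarrow> 'a \<Rightarrow> real) \<Rightarrow> nat \<Rightarrow> 'a \<Rightarrow> (nat \<Rightarrow> real)" where
  "prow s P i w = restrict (\<lambda>j. P i j w) {..<s i}"

definition cexp_le :: "'a measure \<Rightarrow> ('a \<Rightarrow> real) \<Rightarrow> ('a \<Rightarrow> real) \<Rightarrow> real \<Rightarrow> real" where
  "cexp_le M Y Z u =
     (\<integral>w. Y w * indicator {w \<in> space M. Z w \<le> u} w \<partial>M) / measure M {w \<in> space M. Z w \<le> u}"

(* Adaptive BH method, given the estimate c = n0hat(P), the level alpha and the matrix X. *)
definition pihat :: "nat \<Rightarrow> (nat \<Rightarrow> nat) \<Rightarrow> real \<Rightarrow> real" where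
  "pihat b s c = c / real (ntot b s)"

definition qtil :: "nat \<Rightarrow> (nat \<Rightarrow> nat) \<Rightarrow> real \<Rightarrow> (nat \<times> nat \<Rightarrow> real) \<Rightarrow> nat \<Rightarrow> real" where
  "qtil b s c X i = pihat b s c * ((real (ntot b s) / real b) * Min ((\<lambda>j. X (i,j)) ` {..<s i}))"

definition qtil_ord :: "nat \<Rightarrow> (nat \<Rightarrow> nat) \<Rightarrow> real \<Rightarrow> (nat \<times> nat \<Rightarrow> real) \<Rightarrow> nat \<Rightarrow> real" where
  "qtil_ord b s c X k = sort (map (qtil b s c X) [0..<b]) ! (k - 1)"

definition bstar_set :: "nat \<Rightarrow> (nat \<Rightarrow> nat) \<Rightarrow> real \<Rightarrow> real \<Rightarrow> (nat \<times> nat \<Rightarrow> real) \<Rightarrow> nat set" where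
  "bstar_set b s \<alpha> c X = {k \<in> {1..b}. qtil_ord b s c X k \<le> real k * \<alpha> / real b}"

definition abh_rejects :: "nat \<Rightarrow> (nat \<Rightarrow> nat) \<Rightarrow> real \<Rightarrow> real \<Rightarrow> (nat \<times> nat \<Rightarrow> real) \<Rightarrow> nat \<Rightarrow> nat \<Rightarrow> bool" where
  "abh_rejects b s \<alpha> c X i j \<longleftrightarrow>
     bstar_set b s \<alpha> c X \<noteq> {} \<and>
     (let B = Max (bstar_set b s \<alpha> c X) in
        qtil b s c X i \<le> qtil_ord b s c X B \<and>
        pihat b s c * X (i,j) \<le> real B * \<alpha> / real (ntot b s))"

(* Number of rejections R and of false rejections V (truenull i j means H_ij = 0, i.e. H_ij true). *)
definition num_rej :: "nat \<Rightarrow> (nat \<Rightarrow> nat) \<Rightarrow> real \<Rightarrow> real \<Rightarrow> (nat \<times> nat \<Rightarrow> real) \<Rightarrow> nat" where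
  "num_rej b s \<alpha> c X = card {(i,j) \<in> idx b s. abh_rejects b s \<alpha> c X i j}"

definition num_false_rej :: "nat \<Rightarrow> (nat \<Rightarrow> nat) \<Rightarrow> (nat \<Rightarrow> nat \<Rightarrow> bool) \<Rightarrow> real \<Rightarrow> real \<Rightarrow> (nat \<times> nat \<Rightarrow> real) \<Rightarrow> nat" where
  "num_false_rej b s truenull \<alpha> c X = card {(i,j) \<in> idx b s. truenull i j \<and> abh_rejects b s \<alpha> c X i j}"

definition abh_fdr :: "'a measure \<Rightarrow> nat \<Rightarrow> (nat \<Rightarrow> nat) \<Rightarrow> (nat \<Rightarrow> nat \<Rightarrow> bool) \<Rightarrow> real
     \<Rightarrow> ((nat \<times> nat \<Rightarrow> real) \<Rightarrow> real) \<Rightarrow> (nat \<Rightarrow> nat \<Rightarrow> 'a \<Rightarrow> real) \<Rightarrow> real" where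
  "abh_fdr M b s truenull \<alpha> n0hat P =
     (\<integral>w. (let X = pmat b s P w; c = n0hat X in
            real (num_false_rej b s truenull \<alpha> c X) / real (max (num_rej b s \<alpha> c X) 1)) \<partial>M)"

(* n0hat(P^(-i), 0) under the Dirac-uniform configuration: row i set to 0,
   false-null p-values set to 0, true-null p-values of the other rows kept. *)
definition du_mat :: "nat \<Rightarrow> (nat \<Rightarrow> nat) \<Rightarrow> (nat \<Rightarrow> nat \<Rightarrow> bool) \<Rightarrow> (nat \<Rightarrow> nat \<Rightarrow> 'a \<Rightarrow> real) \<Rightarrow> nat \<Rightarrow> 'a \<Rightarrow> (nat \<times> nat \<Rightarrow> real)" where
  "du_mat b s truenull P i w =
     restrict (\<lambda>(k,l). if k = i \<or> \<not> truenull k l then 0 else P k l w) (idx b s)"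

end

theory Submission
  imports Defs
begin

text \<open>Let \<open>D = max 1 B*\<close>. Since at least \<open>B*\<close> hypotheses are rejected and every rejected
  \<open>H\<^sub>i\<^sub>j\<close> has \<open>n0hat(P) P\<^sub>i\<^sub>j \<le> D \<alpha>\<close>, the false discovery proportion is at most the sum over
  true nulls of \<open>[c\<^sub>i P\<^sub>i\<^sub>j \<le> D \<alpha>] / D\<close>, where \<open>c\<^sub>i = n0hat(P^(-i), 0) \<le> n0hat(P)\<close> does not
  depend on row \<open>i\<close>. With the other rows fixed, \<open>D\<close> is a non-increasing function of row \<open>i\<close>,
  so positive dependence within the row and uniformity of \<open>P\<^sub>i\<^sub>j\<close> give
  \<open>E [P\<^sub>i\<^sub>j \<le> D t] / D \<le> t\<close> (an Abel summation over the values of \<open>D\<close>). Taking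
  \<open>t = \<alpha> / c\<^sub>i\<close>, integrating over the independent other rows and summing over the true
  nulls, Property 1 bounds the result by \<open>\<alpha>\<close>.\<close>

section \<open>The step-up rule\<close>

lemma sort_map_nth_le_iff:
  fixes f :: "nat \<Rightarrow> 'b::linorder"
  assumes k: "1 \<le> k" "k \<le> b"
  shows "sort (map f [0..<b]) ! (k - 1) \<le> \<theta> \<longleftrightarrow> k \<le> card {l. l < b \<and> f l \<le> \<theta>}"
proof -
  define L where "L = sort (map f [0..<b])"
  have len: "length L = b" and sorted: "sorted L" by (simp_all add: L_def)
  define S where "S = {m. m < b \<and> L ! m \<le> \<theta>}"
  have "card {l. l < b \<and> f l \<le> \<theta>} = length (filter (\<lambda>x. x \<le> \<theta>) (map f [0..<b]))"
    by (simp add: length_filter_conv_card cong: conj_cong)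
  also have "\<dots> = length (filter (\<lambda>x. x \<le> \<theta>) L)"
    unfolding L_def by (metis mset_filter mset_sort size_mset)
  also have "\<dots> = card S"
    by (simp add: length_filter_conv_card len S_def)
  finally have card_eq: "card {l. l < b \<and> f l \<le> \<theta>} = card S" .
  have "L ! (k - 1) \<le> \<theta> \<longleftrightarrow> k \<le> card S"
  proof
    assume "L ! (k - 1) \<le> \<theta>"
    then have "{..<k} \<subseteq> S"
      using k len sorted unfolding S_def
      by (auto intro: order_trans[OF sorted_nth_mono[of L _ "k - 1"]])
    then show "k \<le> card S"
      by (metis S_def card_lessThan card_mono finite_Collect_conjI finite_Collect_less_nat)
  next
    assume card_ge: "k \<le> card S"
    show "L ! (k - 1) \<le> \<theta>"
    proof (rule ccontr)
      assume "\<not> L ! (k - 1) \<le> \<theta>"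
      then have "S \<subseteq> {..<k - 1}"
        using sorted len unfolding S_def
        by (auto simp: not_less[symmetric] dest: sorted_nth_mono[of L "k - 1"])
      then have "card S \<le> k - 1"
        by (metis card_lessThan card_mono finite_lessThan)
      then show False using card_ge k by linarith
    qed
  qed
  then show ?thesis unfolding L_def card_eq .
qed

definition row_min :: "(nat \<Rightarrow> nat) \<Rightarrow> (nat \<times> nat \<Rightarrow> real) \<Rightarrow> nat \<Rightarrow> real" where
  "row_min s X i = Min ((\<lambda>j. X (i,j)) ` {..<s i})"

lemma row_min_le: "j < s i \<Longrightarrow> row_min s X i \<le> X (i,j)"
  unfolding row_min_def by (intro Min_le) auto

lemma row_min_attained:
  assumes "1 \<le> s i"
  obtains j where "j < s i" "X (i,j) = row_min s X i"
proof -
  have "row_min s X i \<in> (\<lambda>j. X (i,j)) ` {..<s i}"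
    unfolding row_min_def using assms by (intro Min_in) (auto simp: lessThan_empty_iff)
  then show ?thesis using that by auto
qed

lemma row_min_mono:
  assumes "1 \<le> s i" "\<And>j. j < s i \<Longrightarrow> X (i,j) \<le> Y (i,j)"
  shows "row_min s X i \<le> row_min s Y i"
proof -
  obtain j where "j < s i" "Y (i,j) = row_min s Y i" using row_min_attained assms(1) .
  then show ?thesis using row_min_le[of j s i X] assms(2) by fastforce
qed

lemma mem_idx_iff [simp]: "(i,j) \<in> idx b s \<longleftrightarrow> i < b \<and> j < s i"
  unfolding idx_def by auto

lemma finite_idx: "finite (idx b s)"
  unfolding idx_def by auto

lemma ntot_pos:
  assumes "1 \<le> b" "\<forall>i<b. 1 \<le> s i"
  shows "0 < ntot b s"
proof -
  have "s 0 \<le> (\<Sum>i<b. s i)" using assms(1) by (intro member_le_sum) auto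
  then show ?thesis using assms unfolding ntot_def by fastforce
qed

lemma qtil_le_iff:
  assumes "1 \<le> b" "0 < ntot b s"
  shows "qtil b s c X i \<le> real k * \<alpha> / real b \<longleftrightarrow> c * row_min s X i \<le> real k * \<alpha>"
proof -
  have "qtil b s c X i = c * row_min s X i / real b"
    using assms unfolding qtil_def pihat_def row_min_def by (simp add: field_simps)
  then show ?thesis using assms(1) by (simp add: divide_le_cancel)
qed

lemma mem_bstar_set_iff:
  assumes "1 \<le> b" "0 < ntot b s"
  shows "k \<in> bstar_set b s \<alpha> c X \<longleftrightarrow>
           1 \<le> k \<and> k \<le> b \<and> k \<le> card {i. i < b \<and> c * row_min s X i \<le> real k * \<alpha>}"
  unfolding bstar_set_def qtil_ord_def
  using sort_map_nth_le_iff[of k b "qtil b s c X" "real k * \<alpha> / real b"] qtil_le_iff[OF assms]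
  by auto

lemma finite_bstar_set: "finite (bstar_set b s \<alpha> c X)"
  unfolding bstar_set_def by auto

lemma qtil_le_qtil_ord_Max_bstar_set:
  assumes b: "1 \<le> b" and n: "0 < ntot b s" and ne: "bstar_set b s \<alpha> c X \<noteq> {}"
    and \<alpha>: "0 \<le> \<alpha>" and i: "i < b" "c * row_min s X i \<le> real (Max (bstar_set b s \<alpha> c X)) * \<alpha>"
  shows "qtil b s c X i \<le> qtil_ord b s c X (Max (bstar_set b s \<alpha> c X))"
proof (rule ccontr)
  define B where "B = Max (bstar_set b s \<alpha> c X)"
  let ?q = "qtil b s c X"
  assume "\<not> ?q i \<le> qtil_ord b s c X (Max (bstar_set b s \<alpha> c X))"
  then have lt: "qtil_ord b s c X B < ?q i" unfolding B_def by simp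
  have "B \<in> bstar_set b s \<alpha> c X" unfolding B_def using ne finite_bstar_set by (rule Max_in[rotated])
  then have B: "1 \<le> B" "B \<le> b" unfolding bstar_set_def by auto
  have "B \<le> card {m. m < b \<and> ?q m \<le> qtil_ord b s c X B}"
    using sort_map_nth_le_iff[of B b ?q "qtil_ord b s c X B"] B unfolding qtil_ord_def by simp
  also have "\<dots> < card (insert i {m. m < b \<and> ?q m \<le> qtil_ord b s c X B})"
    using lt by (subst card_insert_disjoint) auto
  also have "\<dots> \<le> card {m. m < b \<and> ?q m \<le> ?q i}"
    using lt i(1) by (intro card_mono) auto
  finally have card_gt: "B + 1 \<le> card {m. m < b \<and> ?q m \<le> ?q i}" by simp
  moreover have "card {m. m < b \<and> ?q m \<le> ?q i} \<le> b"
    by (metis (no_types, lifting) card_lessThan card_mono finite_lessThan lessThan_iff mem_Collect_eq subsetI)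
  ultimately have Bb: "B + 1 \<le> b" by linarith
  have "qtil_ord b s c X (B + 1) \<le> ?q i"
    using sort_map_nth_le_iff[of "B + 1" b ?q] card_gt Bb unfolding qtil_ord_def by simp
  also have "?q i \<le> real B * \<alpha> / real b" using qtil_le_iff[OF b n] i(2) B_def by simp
  also have "\<dots> \<le> real (B + 1) * \<alpha> / real b" using \<alpha> by (intro divide_right_mono mult_right_mono) auto
  finally have "B + 1 \<in> bstar_set b s \<alpha> c X" unfolding bstar_set_def using Bb by simp
  then show False using Max_ge[OF finite_bstar_set, of "B + 1" b s \<alpha> c X] B_def by simp
qed

text \<open>Every row \<open>i\<close> with \<open>c min\<^sub>j X\<^sub>i\<^sub>j \<le> B* \<alpha>\<close> passes the row screen (by maximality of \<open>B*\<close>),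
  and its minimal entry passes the second threshold; there are at least \<open>B*\<close> such rows.\<close>
lemma Max_bstar_set_le_num_rej:
  assumes b: "1 \<le> b" and s: "\<forall>i<b. 1 \<le> s i" and ne: "bstar_set b s \<alpha> c X \<noteq> {}"
    and \<alpha>: "0 \<le> \<alpha>"
  shows "Max (bstar_set b s \<alpha> c X) \<le> num_rej b s \<alpha> c X"
proof -
  have n: "0 < ntot b s" using ntot_pos b s by blast
  define B where "B = Max (bstar_set b s \<alpha> c X)"
  define Rows where "Rows = {i. i < b \<and> c * row_min s X i \<le> real B * \<alpha>}"
  have "B \<in> bstar_set b s \<alpha> c X" unfolding B_def using ne finite_bstar_set by (rule Max_in[rotated])
  then have B_le_card: "B \<le> card Rows" unfolding Rows_def using mem_bstar_set_iff[OF b n] by blast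
  define jmin where "jmin = (\<lambda>i. SOME j. j < s i \<and> X (i,j) = row_min s X i)"
  have jmin: "jmin i < s i \<and> X (i, jmin i) = row_min s X i" if "i < b" for i
    unfolding jmin_def using row_min_attained[of s i X] s that by (metis (mono_tags, lifting) someI_ex)
  have "(\<lambda>i. (i, jmin i)) ` Rows \<subseteq> {(i,j) \<in> idx b s. abh_rejects b s \<alpha> c X i j}"
  proof clarify
    fix i assume "i \<in> Rows"
    then have i: "i < b" "c * row_min s X i \<le> real B * \<alpha>" unfolding Rows_def by auto
    have "pihat b s c * X (i, jmin i) = c * row_min s X i / real (ntot b s)"
      using jmin[OF i(1)] unfolding pihat_def by simp
    also have "\<dots> \<le> real B * \<alpha> / real (ntot b s)" using i n by (intro divide_right_mono) auto
    finally show "(i, jmin i) \<in> idx b s \<and> abh_rejects b s \<alpha> c X i (jmin i)"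
      using qtil_le_qtil_ord_Max_bstar_set[OF b n ne \<alpha> i[unfolded B_def]] jmin[OF i(1)] i ne
      unfolding abh_rejects_def B_def by simp
  qed
  then have "card ((\<lambda>i. (i, jmin i)) ` Rows) \<le> num_rej b s \<alpha> c X"
    unfolding num_rej_def by (intro card_mono finite_subset[OF _ finite_idx]) auto
  moreover have "card ((\<lambda>i. (i, jmin i)) ` Rows) = card Rows"
    by (rule card_image) (simp add: inj_on_def)
  ultimately show ?thesis using B_le_card B_def by simp
qed

definition abh_cutoff :: "nat \<Rightarrow> (nat \<Rightarrow> nat) \<Rightarrow> real \<Rightarrow> real \<Rightarrow> (nat \<times> nat \<Rightarrow> real) \<Rightarrow> nat" where
  "abh_cutoff b s \<alpha> c X = max 1 (Max (insert 0 (bstar_set b s \<alpha> c X)))"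

lemma abh_cutoff_eq_Max:
  assumes ne: "bstar_set b s \<alpha> c X \<noteq> {}"
  shows "abh_cutoff b s \<alpha> c X = Max (bstar_set b s \<alpha> c X)"
proof -
  have "Max (bstar_set b s \<alpha> c X) \<in> bstar_set b s \<alpha> c X"
    using Max_in[OF finite_bstar_set ne] .
  then have "1 \<le> Max (bstar_set b s \<alpha> c X)" unfolding bstar_set_def by simp
  then show ?thesis unfolding abh_cutoff_def using Max_insert[OF finite_bstar_set ne] by simp
qed

lemma abh_cutoff_bounds:
  assumes "1 \<le> b"
  shows "1 \<le> abh_cutoff b s \<alpha> c X \<and> abh_cutoff b s \<alpha> c X \<le> b"
proof -
  have "Max (insert 0 (bstar_set b s \<alpha> c X)) \<le> b"
    using finite_bstar_set by (intro Max.boundedI) (auto simp: bstar_set_def)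
  then show ?thesis using assms unfolding abh_cutoff_def by simp
qed

text \<open>Each false rejection is a true null \<open>p\<close> with \<open>c X\<^sub>p \<le> D \<alpha>\<close>, and there are at least
  \<open>D\<close> rejections.\<close>
lemma fdp_le_sum_true_nulls:
  fixes c :: real and X :: "nat \<times> nat \<Rightarrow> real"
  assumes b: "1 \<le> b" and s: "\<forall>i<b. 1 \<le> s i" and \<alpha>: "0 \<le> \<alpha>"
  defines "D \<equiv> abh_cutoff b s \<alpha> c X"
  shows "real (num_false_rej b s tn \<alpha> c X) / real (max (num_rej b s \<alpha> c X) 1)
     \<le> (\<Sum>p\<in>{(i,j) \<in> idx b s. tn i j}. if c * X p \<le> real D * \<alpha> then 1 / real D else 0)"
    (is "?fdp \<le> (\<Sum>p\<in>?T. ?g p)")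
proof (cases "bstar_set b s \<alpha> c X = {}")
  case True
  then have "?fdp = 0" unfolding num_false_rej_def abh_rejects_def by simp
  also have "0 \<le> (\<Sum>p\<in>?T. ?g p)" by (intro sum_nonneg) auto
  finally show ?thesis .
next
  case ne: False
  have n: "0 < ntot b s" using ntot_pos b s by blast
  have DB: "D = Max (bstar_set b s \<alpha> c X)" unfolding D_def using abh_cutoff_eq_Max[OF ne] .
  have D1: "1 \<le> D" using abh_cutoff_bounds[OF b] D_def by blast
  define S where "S = {(i,j) \<in> idx b s. tn i j \<and> abh_rejects b s \<alpha> c X i j}"
  have rej: "c * X p \<le> real D * \<alpha>" if "p \<in> S" for p
  proof -
    obtain i j where p: "p = (i,j)" by (cases p)
    have "c * X (i,j) / real (ntot b s) \<le> real D * \<alpha> / real (ntot b s)"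
      using that unfolding S_def p abh_rejects_def Let_def DB pihat_def by simp
    then show ?thesis using n p by (simp add: divide_le_cancel)
  qed
  have "?fdp \<le> real (card S) / real D"
    unfolding num_false_rej_def S_def
    using D1 Max_bstar_set_le_num_rej[OF b s ne \<alpha>] DB by (intro divide_left_mono) auto
  also have "\<dots> = (\<Sum>p\<in>S. ?g p)" using rej by simp
  also have "\<dots> \<le> (\<Sum>p\<in>?T. ?g p)"
    unfolding S_def by (intro sum_mono2 finite_subset[OF _ finite_idx]) auto
  finally show ?thesis .
qed

lemma bstar_set_antimono:
  assumes b: "1 \<le> b" and s: "\<forall>i<b. 1 \<le> s i" and c: "0 \<le> c'" "c' \<le> c"
    and X: "\<forall>p\<in>idx b s. 0 \<le> X' p \<and> X' p \<le> X p"
  shows "bstar_set b s \<alpha> c X \<subseteq> bstar_set b s \<alpha> c' X'"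
proof -
  have n: "0 < ntot b s" using ntot_pos b s by blast
  have "c' * row_min s X' i \<le> c * row_min s X i" if i: "i < b" for i
  proof (rule mult_mono[OF c(2)])
    show "row_min s X' i \<le> row_min s X i" using s X i by (intro row_min_mono) auto
    obtain j where "j < s i" "X' (i,j) = row_min s X' i" using row_min_attained s i by blast
    then show "0 \<le> row_min s X' i" using X i by (metis mem_idx_iff)
  qed (use c in auto)
  then have "card {i. i < b \<and> c * row_min s X i \<le> real k * \<alpha>}
      \<le> card {i. i < b \<and> c' * row_min s X' i \<le> real k * \<alpha>}" for k
    by (intro card_mono) (auto intro: order_trans)
  then show ?thesis using mem_bstar_set_iff[OF b n] by (meson le_trans subsetI)
qed

lemma abh_cutoff_antimono:
  assumes "1 \<le> b" "\<forall>i<b. 1 \<le> s i" "0 \<le> c'" "c' \<le> c"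
    and "\<forall>p\<in>idx b s. 0 \<le> X' p \<and> X' p \<le> X p"
  shows "abh_cutoff b s \<alpha> c X \<le> abh_cutoff b s \<alpha> c' X'"
  unfolding abh_cutoff_def using bstar_set_antimono[OF assms] finite_bstar_set
  by (intro max.mono Max_mono) auto

lemma measurable_row_min:
  assumes "X \<in> measurable N (PiM K (\<lambda>_. borel))" "\<forall>j<s i. (i,j) \<in> K"
  shows "(\<lambda>x. row_min s (X x) i) \<in> borel_measurable N"
  unfolding row_min_def
  using assms by (intro borel_measurable_Min) (auto intro: measurable_PiM_component_rev)

lemma measurable_abh_cutoff:
  assumes b: "1 \<le> b" and s: "\<forall>i<b. 1 \<le> s i"
    and c: "c \<in> borel_measurable N" and X: "X \<in> measurable N (PiM (idx b s) (\<lambda>_. borel))"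
  shows "(\<lambda>x. abh_cutoff b s \<alpha> (c x) (X x)) \<in> measurable N (count_space UNIV)"
proof -
  have n: "0 < ntot b s" using ntot_pos b s by blast
  have count_eq: "real (card {i. i < b \<and> Q i}) = (\<Sum>i<b. if Q i then 1 else 0)" for Q
    by (simp add: sum.If_cases lessThan_def Collect_conj_eq)
  have "(\<lambda>x. if c x * row_min s (X x) i \<le> real k * \<alpha> then 1 else 0 :: real) \<in> borel_measurable N"
    if "i < b" for i k
    using that by (intro measurable_If measurable_const borel_measurable_le borel_measurable_times c
        measurable_row_min[OF X] borel_measurable_const) auto
  then have "(\<lambda>x. real (card {i. i < b \<and> c x * row_min s (X x) i \<le> real k * \<alpha>})) \<in> borel_measurable N"
    for k unfolding count_eq by (intro borel_measurable_sum) auto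
  then have level_sets: "{x \<in> space N. real k \<le> real (card {i. i < b \<and> c x * row_min s (X x) i \<le> real k * \<alpha>})}
      \<in> sets N" for k
    by (intro borel_measurable_le borel_measurable_const)
  have "Measurable.pred N (\<lambda>x. k = 0 \<or> k \<in> bstar_set b s \<alpha> (c x) (X x))" for k
  proof (cases "1 \<le> k \<and> k \<le> b")
    case True
    then have "{x \<in> space N. k = 0 \<or> k \<in> bstar_set b s \<alpha> (c x) (X x)} =
        {x \<in> space N. real k \<le> real (card {i. i < b \<and> c x * row_min s (X x) i \<le> real k * \<alpha>})}"
      by (auto simp: mem_bstar_set_iff[OF b n])
    then show ?thesis using level_sets unfolding Measurable.pred_def by (simp only:)
  next
    case False
    then have "{x \<in> space N. k = 0 \<or> k \<in> bstar_set b s \<alpha> (c x) (X x)} = (if k = 0 then space N else {})"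
      by (auto simp: mem_bstar_set_iff[OF b n])
    then show ?thesis unfolding Measurable.pred_def by simp
  qed
  then have "(\<lambda>x. Max {k. k = 0 \<or> k \<in> bstar_set b s \<alpha> (c x) (X x)}) \<in> measurable N (count_space UNIV)"
    by (rule measurable_Max_nat)
  then show ?thesis unfolding abh_cutoff_def insert_compr
    by (rule measurable_compose[where g = "max 1"]) simp
qed

section \<open>An expectation bound under positive dependence\<close>

lemma sum_weighted_increments_le:
  fixes w H :: "nat \<Rightarrow> real"
  assumes w_antimono: "\<And>k. 1 \<le> k \<Longrightarrow> w (Suc k) \<le> w k" and w_nonneg: "\<And>k. 0 \<le> w k"
    and H_le_1: "\<And>k. H k \<le> 1" and H0: "H 0 = 0" and n: "1 \<le> n"
  shows "(\<Sum>k=1..n. w k * (H k - H (k - 1))) \<le> w 1"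
proof -
  have "(\<Sum>k=1..n. w k * (H k - H (k - 1))) \<le> w 1 - w n * (1 - H n)"
    using n
  proof (induction n rule: dec_induct)
    case base
    then show ?case using H0 by (simp add: algebra_simps)
  next
    case (step n)
    have "(w n - w (Suc n)) * H n \<le> w n - w (Suc n)"
      using w_antimono[of n] step H_le_1[of n] by (simp add: mult_left_le)
    then show ?case using step by (simp add: algebra_simps)
  qed
  moreover have "0 \<le> w n * (1 - H n)" using w_nonneg H_le_1 by simp
  ultimately show ?thesis by linarith
qed

context prob_space
begin

lemma prob_le_uniform:
  assumes "distr M lborel Z = uniform_measure lborel {0..1}" "Z \<in> borel_measurable M"
    and "0 \<le> u" "u \<le> 1"
  shows "prob {x \<in> space M. Z x \<le> u} = u"
proof -
  have "prob {x \<in> space M. Z x \<le> u} = measure (distr M lborel Z) {..u}"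
    using assms(2) by (subst measure_distr) (auto simp: vimage_def Int_def conj_commute)
  also have "\<dots> = u"
  proof -
    have "{0..1} \<inter> {..u} = {0..u::real}" using assms by auto
    then show ?thesis using assms by (simp add: measure_def emeasure_uniform_measure divide_ennreal_def)
  qed
  finally show ?thesis .
qed

text \<open>\<open>cond_prob_le Q Z u\<close> is \<open>P(Q | Z \<le> u)\<close> (and \<open>0\<close> when \<open>P(Z \<le> u) = 0\<close>).\<close>
definition cond_prob_le :: "('a \<Rightarrow> bool) \<Rightarrow> ('a \<Rightarrow> real) \<Rightarrow> real \<Rightarrow> real" where
  "cond_prob_le Q Z u = prob {x \<in> space M. Q x \<and> Z x \<le> u} / prob {x \<in> space M. Z x \<le> u}"

lemma cond_prob_le_bounds:
  assumes "Z \<in> borel_measurable M"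
  shows "0 \<le> cond_prob_le Q Z u \<and> cond_prob_le Q Z u \<le> 1"
proof -
  have "prob {x \<in> space M. Q x \<and> Z x \<le> u} \<le> prob {x \<in> space M. Z x \<le> u}"
    using assms by (intro finite_measure_mono) auto
  then show ?thesis
    unfolding cond_prob_le_def by (auto simp: divide_le_eq_1 less_le)
qed

lemma cond_prob_le_empty:
  assumes "\<And>x. x \<in> space M \<Longrightarrow> \<not> Q x"
  shows "cond_prob_le Q Z u = 0"
proof -
  have empty: "{x \<in> space M. Q x \<and> Z x \<le> u} = {}" using assms by blast
  show ?thesis unfolding cond_prob_le_def empty by simp
qed

lemma cexp_le_indicator:
  assumes "{x \<in> space M. Q x \<and> Z x \<le> u} \<in> events"
  shows "cexp_le M (\<lambda>x. if Q x then 1 else 0) Z u = cond_prob_le Q Z u"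
proof -
  have "(\<integral>x. (if Q x then 1 else 0 :: real) * indicator {x \<in> space M. Z x \<le> u} x \<partial>M)
      = (\<integral>x. indicator {x \<in> space M. Q x \<and> Z x \<le> u} x \<partial>M)"
    by (intro Bochner_Integration.integral_cong) (auto simp: indicator_def)
  then show ?thesis unfolding cexp_le_def cond_prob_le_def by (simp add: Int_absorb2)
qed

text \<open>Positive dependence only controls \<open>P(Q | Z \<le> u)\<close> for \<open>u < 1\<close>; since \<open>Z \<le> 1\<close>, the
  ratio is constant from \<open>u = 1\<close> on and the gap at \<open>1\<close> is closed by letting \<open>u \<rightarrow> 1\<close>.\<close>
lemma cond_prob_le_mono:
  assumes Z: "Z \<in> borel_measurable M" "\<And>x. x \<in> space M \<Longrightarrow> 0 \<le> Z x \<and> Z x \<le> 1"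
    and unif: "\<And>u. 0 \<le> u \<Longrightarrow> u \<le> 1 \<Longrightarrow> prob {x \<in> space M. Z x \<le> u} = u"
    and Q: "{x \<in> space M. Q x} \<in> events"
    and pd: "mono_on {0<..<1} (cond_prob_le Q Z)"
  shows "mono_on {0<..} (cond_prob_le Q Z)"
proof -
  let ?G = "cond_prob_le Q Z"
  have G_ge_1: "?G u = prob {x \<in> space M. Q x}" if "1 \<le> u" for u
  proof -
    have "{x \<in> space M. Z x \<le> u} = space M" "{x \<in> space M. Q x \<and> Z x \<le> u} = {x \<in> space M. Q x}"
      using Z(2) that by force+
    then show ?thesis unfolding cond_prob_le_def by (simp add: prob_space)
  qed
  have G_le: "?G u \<le> prob {x \<in> space M. Q x}" if u: "0 < u" "u < 1" for u
  proof (rule field_le_mult_one_interval)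
    fix z :: real assume z: "0 < z" "z < 1"
    define v where "v = max z ((u + 1) / 2)"
    have v: "u \<le> v" "v < 1" "z \<le> v" "0 < v"
      using u z unfolding v_def by (auto simp: le_max_iff_disj less_max_iff_disj)
    have "z * ?G u \<le> v * ?G v"
      using v u mono_onD[OF pd, of u v] cond_prob_le_bounds[OF Z(1)] by (intro mult_mono) auto
    also have "\<dots> = prob {x \<in> space M. Q x \<and> Z x \<le> v}" unfolding cond_prob_le_def using unif v by simp
    also have "\<dots> \<le> prob {x \<in> space M. Q x}" using Q by (intro finite_measure_mono) auto
    finally show "z * ?G u \<le> prob {x \<in> space M. Q x}" .
  qed
  show ?thesis
  proof (rule mono_onI)
    fix u v :: real assume "u \<in> {0<..}" "v \<in> {0<..}" "u \<le> v"
    then show "?G u \<le> ?G v"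
      using mono_onD[OF pd, of u v] G_ge_1 G_le by (cases "v < 1"; cases "u < 1") auto
  qed
qed

lemma nn_integral_step_up_indicator:
  fixes D :: "'a \<Rightarrow> nat"
  assumes Z: "Z \<in> borel_measurable M" and D: "D \<in> measurable M (count_space UNIV)"
    and D_range: "\<And>x. x \<in> space M \<Longrightarrow> 1 \<le> D x \<and> D x \<le> b"
  shows "(\<integral>\<^sup>+x. ennreal (if Z x \<le> real (D x) * t then 1 / real (D x) else 0) \<partial>M)
    = ennreal (\<Sum>k=1..b. prob {x \<in> space M. D x = k \<and> Z x \<le> real k * t} / real k)"
proof -
  define E where "E k = {x \<in> space M. D x = k \<and> Z x \<le> real k * t}" for k
  have E_sets: "E k \<in> events" for k unfolding E_def using Z D by measurable
  have "ennreal (if Z x \<le> real (D x) * t then 1 / real (D x) else 0)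
      = (\<Sum>k=1..b. ennreal (1 / real k) * indicator (E k) x)" if x: "x \<in> space M" for x
  proof -
    have "(\<Sum>k=1..b. ennreal (1 / real k) * indicator (E k) x)
        = (\<Sum>k=1..b. if k = D x then ennreal (if Z x \<le> real (D x) * t then 1 / real (D x) else 0) else 0)"
      by (intro sum.cong) (auto simp: E_def indicator_def x)
    then show ?thesis using D_range[OF x] by (simp add: sum.delta)
  qed
  then have "(\<integral>\<^sup>+x. ennreal (if Z x \<le> real (D x) * t then 1 / real (D x) else 0) \<partial>M)
      = (\<integral>\<^sup>+x. (\<Sum>k=1..b. ennreal (1 / real k) * indicator (E k) x) \<partial>M)"
    by (intro nn_integral_cong) auto
  also have "\<dots> = (\<Sum>k=1..b. ennreal (1 / real k) * emeasure M (E k))"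
    using E_sets by (subst nn_integral_sum) (auto simp: nn_integral_cmult_indicator)
  also have "\<dots> = ennreal (\<Sum>k=1..b. prob (E k) / real k)"
    by (simp add: emeasure_eq_measure ennreal_mult[symmetric] sum_ennreal)
  finally show ?thesis unfolding E_def .
qed

lemma prob_le_eq_min:
  assumes Z: "\<And>x. x \<in> space M \<Longrightarrow> Z x \<le> 1"
    and unif: "\<And>u. 0 \<le> u \<Longrightarrow> u \<le> 1 \<Longrightarrow> prob {x \<in> space M. Z x \<le> u} = u" and u: "0 < u"
  shows "prob {x \<in> space M. Z x \<le> u} = min u 1"
proof (cases "u \<le> 1")
  case False
  then have "{x \<in> space M. Z x \<le> u} = space M" using Z by force
  then show ?thesis using False by (simp add: prob_space)
qed (use unif u in auto)

text \<open>With \<open>G\<^sub>k(u) = P(D \<le> k | Z \<le> u)\<close> non-decreasing in \<open>u\<close>,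
  \<open>P(D = k, Z \<le> kt) = P(Z \<le> kt) (G\<^sub>k(kt) - G\<^sub>k\<^sub>-\<^sub>1(kt)) \<le> P(Z \<le> kt) (G\<^sub>k(kt) - G\<^sub>k\<^sub>-\<^sub>1((k-1)t))\<close>.\<close>
lemma prob_level_le_cond_prob_increment:
  fixes Z :: "'a \<Rightarrow> real" and D :: "'a \<Rightarrow> nat"
  assumes Z: "Z \<in> borel_measurable M" "\<And>x. x \<in> space M \<Longrightarrow> 0 \<le> Z x \<and> Z x \<le> 1"
    and unif: "\<And>u. 0 \<le> u \<Longrightarrow> u \<le> 1 \<Longrightarrow> prob {x \<in> space M. Z x \<le> u} = u"
    and D: "D \<in> measurable M (count_space UNIV)" and D_pos: "\<And>x. x \<in> space M \<Longrightarrow> 1 \<le> D x"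
    and pd: "\<And>k. mono_on {0<..<1} (cond_prob_le (\<lambda>x. D x \<le> k) Z)"
    and t: "0 < t" and k: "1 \<le> k"
  shows "prob {x \<in> space M. D x = k \<and> Z x \<le> real k * t}
           \<le> min (real k * t) 1 * (cond_prob_le (\<lambda>x. D x \<le> k) Z (real k * t)
                                   - cond_prob_le (\<lambda>x. D x \<le> k - 1) Z (real (k - 1) * t))"
proof -
  have kt: "0 < real k * t" using k t by simp
  have cdf: "prob {x \<in> space M. Z x \<le> real k * t} = min (real k * t) 1"
    using prob_le_eq_min[OF _ unif kt] Z(2) by blast
  have "{x \<in> space M. D x = k \<and> Z x \<le> real k * t} = {x \<in> space M. D x \<le> k \<and> Z x \<le> real k * t}
      - {x \<in> space M. D x \<le> k - 1 \<and> Z x \<le> real k * t}" using k by auto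
  also have "prob \<dots> = prob {x \<in> space M. D x \<le> k \<and> Z x \<le> real k * t}
      - prob {x \<in> space M. D x \<le> k - 1 \<and> Z x \<le> real k * t}"
    using Z(1) D by (intro finite_measure_Diff) auto
  also have "\<dots> = min (real k * t) 1 * (cond_prob_le (\<lambda>x. D x \<le> k) Z (real k * t)
                                       - cond_prob_le (\<lambda>x. D x \<le> k - 1) Z (real k * t))"
    unfolding cond_prob_le_def cdf using kt by (simp add: field_simps)
  also have "\<dots> \<le> min (real k * t) 1 * (cond_prob_le (\<lambda>x. D x \<le> k) Z (real k * t)
                                       - cond_prob_le (\<lambda>x. D x \<le> k - 1) Z (real (k - 1) * t))"
  proof (intro mult_left_mono diff_left_mono)
    show "cond_prob_le (\<lambda>x. D x \<le> k - 1) Z (real (k - 1) * t) \<le> cond_prob_le (\<lambda>x. D x \<le> k - 1) Z (real k * t)"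
    proof (cases "k = 1")
      case True
      then have "cond_prob_le (\<lambda>x. D x \<le> k - 1) Z u = 0" for u
        using D_pos by (intro cond_prob_le_empty) fastforce
      then show ?thesis by simp
    next
      case False
      have events: "{x \<in> space M. D x \<le> k - 1} \<in> events" using D by measurable
      have "0 < real (k - 1) * t" "real (k - 1) * t \<le> real k * t"
        using False k t by auto
      then show ?thesis using kt k by (intro mono_onD[OF cond_prob_le_mono[OF Z unif events pd]]) (auto simp: of_nat_diff)
    qed
  qed (use kt in simp)
  finally show ?thesis .
qed

text \<open>Abel summation against the non-increasing weights \<open>min(kt, 1)/k = min(t, 1/k)\<close>.\<close>
lemma step_up_indicator_bound:
  fixes Z :: "'a \<Rightarrow> real" and D :: "'a \<Rightarrow> nat"
  assumes Z: "Z \<in> borel_measurable M" "\<And>x. x \<in> space M \<Longrightarrow> 0 \<le> Z x \<and> Z x \<le> 1"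
    and unif: "\<And>u. 0 \<le> u \<Longrightarrow> u \<le> 1 \<Longrightarrow> prob {x \<in> space M. Z x \<le> u} = u"
    and D: "D \<in> measurable M (count_space UNIV)"
    and D_range: "\<And>x. x \<in> space M \<Longrightarrow> 1 \<le> D x \<and> D x \<le> b"
    and pd: "\<And>k. mono_on {0<..<1} (cond_prob_le (\<lambda>x. D x \<le> k) Z)"
    and t: "0 < t"
  shows "(\<integral>\<^sup>+x. ennreal (if Z x \<le> real (D x) * t then 1 / real (D x) else 0) \<partial>M) \<le> ennreal t"
proof -
  have b: "1 \<le> b" using D_range not_empty by fastforce
  define H where "H k = cond_prob_le (\<lambda>x. D x \<le> k) Z (real k * t)" for k
  define w where "w k = min (real k * t) 1 / real k" for k
  have "(\<Sum>k=1..b. prob {x \<in> space M. D x = k \<and> Z x \<le> real k * t} / real k)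
      \<le> (\<Sum>k=1..b. w k * (H k - H (k - 1)))"
  proof (intro sum_mono)
    fix k assume "k \<in> {1..b}"
    then have "prob {x \<in> space M. D x = k \<and> Z x \<le> real k * t} \<le> min (real k * t) 1 * (H k - H (k - 1))"
      unfolding H_def using D_range by (intro prob_level_le_cond_prob_increment[OF Z unif D _ pd t]) auto
    then show "prob {x \<in> space M. D x = k \<and> Z x \<le> real k * t} / real k \<le> w k * (H k - H (k - 1))"
      unfolding w_def by (simp add: divide_right_mono)
  qed
  also have "\<dots> \<le> w 1"
  proof (rule sum_weighted_increments_le[OF _ _ _ _ b])
    have w: "w k = min t (1 / real k)" if "1 \<le> k" for k
      unfolding w_def using t that by (auto simp: min_def field_simps)
    show "w (Suc k) \<le> w k" if "1 \<le> k" for k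
      using w[of k] w[of "Suc k"] that frac_le[of 1 1 "real k" "real (Suc k)"] by auto
    show "0 \<le> w k" for k unfolding w_def using t by simp
    show "H k \<le> 1" for k unfolding H_def using cond_prob_le_bounds[OF Z(1)] by blast
    show "H 0 = 0" unfolding H_def using D_range by (intro cond_prob_le_empty) fastforce
  qed
  also have "w 1 \<le> t" unfolding w_def by simp
  finally show ?thesis using nn_integral_step_up_indicator[OF Z(1) D D_range] by (simp add: ennreal_leI)
qed

end

section \<open>The p-value matrix as a function of its rows\<close>

lemma mono_on_PiE_if_coordinatewise:
  fixes f :: "('k \<Rightarrow> real) \<Rightarrow> real"
  assumes mono1: "\<And>X p t. X \<in> PiE K (\<lambda>_. {0..1}) \<Longrightarrow> p \<in> K \<Longrightarrow> X p \<le> t \<Longrightarrow> t \<le> 1 \<Longrightarrow>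
                    f X \<le> f (X(p := t))"
    and K: "finite K" and X: "X \<in> PiE K (\<lambda>_. {0..1})" and Y: "Y \<in> PiE K (\<lambda>_. {0..1})"
    and le: "\<And>p. p \<in> K \<Longrightarrow> X p \<le> Y p"
  shows "f X \<le> f Y"
proof -
  have "\<forall>X \<in> PiE K (\<lambda>_. {0..1}). (\<forall>p\<in>K. X p \<le> Y p) \<longrightarrow> (\<forall>p\<in>K - S. X p = Y p) \<longrightarrow> f X \<le> f Y"
    if "finite S" "S \<subseteq> K" for S
    using that
  proof (induction rule: finite_subset_induct)
    case empty
    show ?case
    proof (intro ballI impI)
      fix X assume X: "X \<in> PiE K (\<lambda>_. {0..1})" and "\<forall>p\<in>K. X p \<le> Y p"
        and "\<forall>p\<in>K - {}. X p = Y p"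
      then have "X = Y" using PiE_ext[OF X Y] by auto
      then show "f X \<le> f Y" by simp
    qed
  next
    case (insert q S)
    show ?case
    proof (intro ballI impI)
      fix X assume X: "X \<in> PiE K (\<lambda>_. {0..1})" and "\<forall>p\<in>K. X p \<le> Y p" "\<forall>p\<in>K - insert q S. X p = Y p"
      moreover have "Y q \<in> {0..1}" using Y insert.hyps(2) by auto
      ultimately have "X(q := Y q) \<in> PiE K (\<lambda>_. {0..1})" "f X \<le> f (X(q := Y q))"
        using insert.hyps(2) mono1 by (auto simp: PiE_iff extensional_def)
      moreover have "f (X(q := Y q)) \<le> f Y"
        using insert.IH calculation(1) \<open>\<forall>p\<in>K. X p \<le> Y p\<close> \<open>\<forall>p\<in>K - insert q S. X p = Y p\<close> by auto
      ultimately show "f X \<le> f Y" by linarith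
    qed
  qed
  from this[OF K subset_refl] show ?thesis using X le by blast
qed

definition clamp01 :: "real \<Rightarrow> real" where
  "clamp01 v = max 0 (min 1 v)"

lemma clamp01_bounds: "0 \<le> clamp01 v \<and> clamp01 v \<le> 1"
  unfolding clamp01_def by auto

lemma clamp01_id: "0 \<le> v \<Longrightarrow> v \<le> 1 \<Longrightarrow> clamp01 v = v"
  unfolding clamp01_def by auto

lemma clamp01_mono: "v \<le> w \<Longrightarrow> clamp01 v \<le> clamp01 w"
  unfolding clamp01_def by auto

lemma borel_measurable_clamp01 [measurable]: "clamp01 \<in> borel_measurable borel"
  unfolding clamp01_def by measurable

text \<open>Clamping to \<open>[0,1]\<close> makes \<open>mat_of_rows b s x\<close> a legal argument of the estimator at
  every point \<open>x\<close> of the product space; on actual \<open>p\<close>-values it is the identity.\<close>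
definition mat_of_rows :: "nat \<Rightarrow> (nat \<Rightarrow> nat) \<Rightarrow> (nat \<Rightarrow> nat \<Rightarrow> real) \<Rightarrow> (nat \<times> nat \<Rightarrow> real)" where
  "mat_of_rows b s x = restrict (\<lambda>(i,j). clamp01 (x i j)) (idx b s)"

lemma mat_of_rows_PiE: "mat_of_rows b s x \<in> PiE (idx b s) (\<lambda>_. {0..1})"
  unfolding mat_of_rows_def using clamp01_bounds by (auto simp: PiE_iff)

lemma mat_of_rows_apply: "p \<in> idx b s \<Longrightarrow> mat_of_rows b s x p = clamp01 (x (fst p) (snd p))"
  unfolding mat_of_rows_def by (cases p) auto

lemma measurable_row_entry:
  assumes "i \<in> I" "j \<in> S i"
  shows "(\<lambda>x. x i j :: real) \<in> borel_measurable (PiM I (\<lambda>i. PiM (S i) (\<lambda>_. borel)))"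
  using measurable_compose[OF measurable_component_singleton[of i I "\<lambda>i. PiM (S i) (\<lambda>_. borel)"]
      measurable_component_singleton[of j "S i" "\<lambda>_. borel"]] assms by simp

lemma measurable_mat_of_rows_upd:
  "(\<lambda>x. mat_of_rows b s (x(i := y)))
     \<in> measurable (PiM {..<b} (\<lambda>i. PiM {..<s i} (\<lambda>_. borel))) (PiM (idx b s) (\<lambda>_. borel))"
  unfolding mat_of_rows_def
proof (rule measurable_restrict)
  fix p assume "p \<in> idx b s"
  moreover obtain k l where "p = (k,l)" by (cases p)
  ultimately show "(\<lambda>x. case p of (k, l) \<Rightarrow> clamp01 ((x(i := y)) k l))
      \<in> borel_measurable (PiM {..<b} (\<lambda>i. PiM {..<s i} (\<lambda>_. borel)))"
    by (cases "k = i")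
      (auto intro: measurable_compose[OF measurable_row_entry borel_measurable_clamp01])
qed

lemma measurable_mat_of_rows:
  "mat_of_rows b s \<in> measurable (PiM {..<b} (\<lambda>i. PiM {..<s i} (\<lambda>_. borel))) (PiM (idx b s) (\<lambda>_. borel))"
proof -
  have "mat_of_rows b s (x(b := y)) = mat_of_rows b s x" for x y
    unfolding mat_of_rows_def by (intro restrict_ext) auto
  then show ?thesis using measurable_mat_of_rows_upd[of b s b] by simp
qed

section \<open>False discovery rate of the adaptive procedure\<close>

locale adaptive_bh = prob_space M
  for M :: "'a measure" and b :: nat and s :: "nat \<Rightarrow> nat"
    and P :: "nat \<Rightarrow> nat \<Rightarrow> 'a \<Rightarrow> real" and truenull :: "nat \<Rightarrow> nat \<Rightarrow> bool"
    and n0hat :: "(nat \<times> nat \<Rightarrow> real) \<Rightarrow> real" and \<alpha> :: real +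
  assumes b: "b \<ge> 1" and s: "\<forall>i<b. s i \<ge> 1" and alpha_pos: "0 < \<alpha>"
    and meas: "\<forall>i<b. \<forall>j<s i. P i j \<in> borel_measurable M"
    and pval: "\<forall>w\<in>space M. \<forall>i<b. \<forall>j<s i. 0 \<le> P i j w \<and> P i j w \<le> 1"
    and unif: "\<forall>i<b. \<forall>j<s i. truenull i j \<longrightarrow>
                 distr M lborel (P i j) = uniform_measure lborel {0..1}"
    and indep: "indep_vars (\<lambda>i. PiM {..<s i} (\<lambda>_. borel)) (prow s P) {..<b}"
    and posdep: "\<forall>i<b. \<forall>j<s i. truenull i j \<longrightarrow>
                 (\<forall>\<phi> :: (nat \<Rightarrow> real) \<Rightarrow> real.
                    \<phi> \<in> borel_measurable (PiM {..<s i} (\<lambda>_. borel)) \<longrightarrow>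
                    (\<forall>x y. (\<forall>k<s i. x k \<le> y k) \<longrightarrow> \<phi> x \<le> \<phi> y) \<longrightarrow>
                    integrable M (\<lambda>w. \<phi> (prow s P i w)) \<longrightarrow>
                    mono_on {0<..<1} (cexp_le M (\<lambda>w. \<phi> (prow s P i w)) (P i j)))"
    and n0_meas: "n0hat \<in> borel_measurable (PiM (idx b s) (\<lambda>_. borel))"
    and n0_pos: "\<forall>X\<in>PiE (idx b s) (\<lambda>_. {0..1}). n0hat X > 0"
    and n0_mono: "\<forall>X\<in>PiE (idx b s) (\<lambda>_. {0..1}). \<forall>(i,j)\<in>idx b s. \<forall>t.
                    X (i,j) \<le> t \<and> t \<le> 1 \<longrightarrow> n0hat X \<le> n0hat (X((i,j) := t))"
begin

abbreviation row_space :: "nat \<Rightarrow> (nat \<Rightarrow> real) measure" where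
  "row_space i \<equiv> PiM {..<s i} (\<lambda>_. borel)"

definition row_tuple :: "'a \<Rightarrow> nat \<Rightarrow> nat \<Rightarrow> real" where
  "row_tuple w = (\<lambda>i\<in>{..<b}. prow s P i w)"

text \<open>Indices outside \<open>{..<b}\<close> never matter; giving them a point mass makes \<open>row_law\<close> a
  family of probability measures on all of \<open>nat\<close>, as the product measure requires.\<close>
definition row_law :: "nat \<Rightarrow> (nat \<Rightarrow> real) measure" where
  "row_law i = (if i < b then distr M (row_space i) (prow s P i)
                else return (row_space i) (\<lambda>j\<in>{..<s i}. 0))"

lemma measurable_prow: "i < b \<Longrightarrow> prow s P i \<in> measurable M (row_space i)"
  unfolding prow_def using meas by (intro measurable_restrict) auto

lemma measurable_row_tuple [measurable]: "row_tuple \<in> measurable M (PiM {..<b} row_space)"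
  unfolding row_tuple_def using measurable_prow by (intro measurable_restrict) auto

lemma sets_row_law: "sets (row_law i) = sets (row_space i)"
  unfolding row_law_def by simp

lemma space_PiM_row_law: "space (PiM I row_law) = space (PiM I row_space)"
  by (intro sets_eq_imp_space_eq sets_PiM_cong) (auto simp: sets_row_law)

lemma product_sigma_finite_row_law: "product_sigma_finite row_law"
proof -
  have "prob_space (row_law i)" for i
    unfolding row_law_def using measurable_prow
    by (auto intro!: prob_space_distr prob_space_return simp: space_PiM)
  then show ?thesis unfolding product_sigma_finite_def using prob_space_imp_sigma_finite by blast
qed

lemma distr_row_tuple: "distr M (PiM {..<b} row_space) row_tuple = PiM {..<b} row_law"
proof -
  have "{..<b} \<noteq> {}" using b by (simp add: lessThan_empty_iff)
  then have "distr M (PiM {..<b} row_space) row_tuple = PiM {..<b} (\<lambda>i. distr M (row_space i) (prow s P i))"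
    using indep_vars_iff_distr_eq_PiM'[where I="{..<b}" and M'=row_space and X="prow s P"] indep measurable_prow
    unfolding row_tuple_def by auto
  also have "\<dots> = PiM {..<b} row_law" by (intro PiM_cong) (auto simp: row_law_def)
  finally show ?thesis .
qed

lemma nn_integral_row_tuple_split:
  assumes i: "i < b" and F: "F \<in> borel_measurable (PiM {..<b} row_space)"
  shows "(\<integral>\<^sup>+w. F (row_tuple w) \<partial>M)
           = (\<integral>\<^sup>+x. (\<integral>\<^sup>+w. F (x(i := prow s P i w)) \<partial>M) \<partial>PiM ({..<b} - {i}) row_law)"
proof -
  interpret product_sigma_finite row_law by (rule product_sigma_finite_row_law)
  define J where "J = {..<b} - {i}"
  have I: "{..<b} = insert i J" "i \<notin> J" "finite J" unfolding J_def using i by auto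
  have sets: "sets (PiM (insert i J) row_law) = sets (PiM {..<b} row_space)"
    unfolding I(1)[symmetric] by (intro sets_PiM_cong) (auto simp: sets_row_law)
  have F': "F \<in> borel_measurable (PiM (insert i J) row_space)" using F I(1) by simp
  have "(\<integral>\<^sup>+w. F (row_tuple w) \<partial>M) = (\<integral>\<^sup>+x. F x \<partial>distr M (PiM {..<b} row_space) row_tuple)"
    using F by (simp add: nn_integral_distr[OF measurable_row_tuple])
  also have "\<dots> = (\<integral>\<^sup>+x. F x \<partial>PiM (insert i J) row_law)"
    by (subst distr_row_tuple) (simp only: I(1))
  also have "\<dots> = (\<integral>\<^sup>+x. (\<integral>\<^sup>+y. F (x(i := y)) \<partial>row_law i) \<partial>PiM J row_law)"
    using F unfolding measurable_cong_sets[OF sets refl, symmetric]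
    by (rule product_nn_integral_insert[OF I(3) I(2)])
  also have "\<dots> = (\<integral>\<^sup>+x. (\<integral>\<^sup>+w. F (x(i := prow s P i w)) \<partial>M) \<partial>PiM J row_law)"
  proof (intro nn_integral_cong)
    fix x assume "x \<in> space (PiM J row_law)"
    then have "(\<lambda>y. x(i := y)) \<in> measurable (row_space i) (PiM (insert i J) row_space)"
      using I(2) unfolding space_PiM_row_law by (rule measurable_component_update)
    from measurable_compose[OF this F']
    have "(\<lambda>y. F (x(i := y))) \<in> borel_measurable (row_space i)" .
    then show "(\<integral>\<^sup>+y. F (x(i := y)) \<partial>row_law i) = (\<integral>\<^sup>+w. F (x(i := prow s P i w)) \<partial>M)"
      unfolding row_law_def using i by (simp add: nn_integral_distr measurable_prow)
  qed
  finally show ?thesis unfolding J_def .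
qed

lemma n0hat_mono:
  assumes "X \<in> PiE (idx b s) (\<lambda>_. {0..1})" "Y \<in> PiE (idx b s) (\<lambda>_. {0..1})"
    and "\<And>p. p \<in> idx b s \<Longrightarrow> X p \<le> Y p"
  shows "n0hat X \<le> n0hat Y"
proof (rule mono_on_PiE_if_coordinatewise[OF _ finite_idx assms])
  fix X :: "nat \<times> nat \<Rightarrow> real" and p t
  assume "X \<in> PiE (idx b s) (\<lambda>_. {0..1})" "p \<in> idx b s" "X p \<le> t" "t \<le> 1"
  then show "n0hat X \<le> n0hat (X(p := t))" using n0_mono by (cases p) blast
qed

definition n0_loo :: "nat \<Rightarrow> (nat \<Rightarrow> nat \<Rightarrow> real) \<Rightarrow> real" where
  "n0_loo i x = n0hat (mat_of_rows b s (x(i := (\<lambda>_. 0))))"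

definition cutoff :: "(nat \<Rightarrow> nat \<Rightarrow> real) \<Rightarrow> nat" where
  "cutoff x = abh_cutoff b s \<alpha> (n0hat (mat_of_rows b s x)) (mat_of_rows b s x)"

definition fdp_summand :: "nat \<times> nat \<Rightarrow> (nat \<Rightarrow> nat \<Rightarrow> real) \<Rightarrow> real" where
  "fdp_summand p x =
     (if n0_loo (fst p) x * mat_of_rows b s x p \<le> real (cutoff x) * \<alpha> then 1 / real (cutoff x) else 0)"

definition fdp :: "'a \<Rightarrow> real" where
  "fdp w = (let X = pmat b s P w; c = n0hat X in
              real (num_false_rej b s truenull \<alpha> c X) / real (max (num_rej b s \<alpha> c X) 1))"

definition true_nulls :: "(nat \<times> nat) set" where
  "true_nulls = {(i,j) \<in> idx b s. truenull i j}"

lemma n0_loo_pos: "0 < n0_loo i x"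
  unfolding n0_loo_def using n0_pos mat_of_rows_PiE by blast

lemma n0_loo_upd [simp]: "n0_loo i (x(i := y)) = n0_loo i x"
  unfolding n0_loo_def by simp

lemma n0_loo_le: "n0_loo i x \<le> n0hat (mat_of_rows b s x)"
  unfolding n0_loo_def using clamp01_bounds
  by (intro n0hat_mono mat_of_rows_PiE) (auto simp: mat_of_rows_apply clamp01_id)

lemma cutoff_antimono:
  assumes "\<And>p. p \<in> idx b s \<Longrightarrow> mat_of_rows b s x p \<le> mat_of_rows b s y p"
  shows "cutoff y \<le> cutoff x"
  unfolding cutoff_def using b s assms n0_loo_pos[of 0 x] n0_loo_le[of 0 x]
  by (intro abh_cutoff_antimono n0hat_mono mat_of_rows_PiE)
    (auto simp: mat_of_rows_apply clamp01_bounds)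

lemma cutoff_bounds: "1 \<le> cutoff x \<and> cutoff x \<le> b"
  unfolding cutoff_def using abh_cutoff_bounds[OF b] .

lemma measurable_n0_loo [measurable]: "n0_loo i \<in> borel_measurable (PiM {..<b} row_space)"
  unfolding n0_loo_def using measurable_mat_of_rows_upd n0_meas by (rule measurable_compose)

lemma measurable_cutoff [measurable]: "cutoff \<in> measurable (PiM {..<b} row_space) (count_space UNIV)"
  unfolding cutoff_def using b s measurable_compose[OF measurable_mat_of_rows n0_meas]
  by (intro measurable_abh_cutoff measurable_mat_of_rows)

lemma measurable_fdp_summand [measurable]: "fdp_summand p \<in> borel_measurable (PiM {..<b} row_space)"
proof -
  have "(\<lambda>x. mat_of_rows b s x p) \<in> borel_measurable (PiM {..<b} row_space)"
  proof (cases "p \<in> idx b s")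
    case True
    then show ?thesis
      using measurable_compose[OF measurable_mat_of_rows measurable_component_singleton[OF True]] by simp
  qed (simp add: mat_of_rows_def)
  moreover have "(\<lambda>x. real (cutoff x)) \<in> borel_measurable (PiM {..<b} row_space)"
    by measurable
  ultimately show ?thesis unfolding fdp_summand_def by measurable
qed

lemma pmat_eq_mat_of_rows: "w \<in> space M \<Longrightarrow> pmat b s P w = mat_of_rows b s (row_tuple w)"
  unfolding pmat_def mat_of_rows_def row_tuple_def prow_def using pval
  by (intro restrict_ext) (auto simp: clamp01_id)

text \<open>Replacing \<open>n0hat(P)\<close> by the smaller \<open>n0_loo\<close> only enlarges the indicator.\<close>
lemma fdp_le_sum_fdp_summand:
  assumes w: "w \<in> space M"
  shows "fdp w \<le> (\<Sum>p\<in>true_nulls. fdp_summand p (row_tuple w))"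
proof -
  define x where "x = row_tuple w"
  have "fdp w \<le> (\<Sum>p\<in>true_nulls. if n0hat (mat_of_rows b s x) * mat_of_rows b s x p \<le> real (cutoff x) * \<alpha>
                          then 1 / real (cutoff x) else 0)"
    using fdp_le_sum_true_nulls[OF b s, of \<alpha> truenull "n0hat (mat_of_rows b s x)" "mat_of_rows b s x"]
      alpha_pos
    unfolding fdp_def pmat_eq_mat_of_rows[OF w] x_def true_nulls_def cutoff_def Let_def by simp
  also have "\<dots> \<le> (\<Sum>p\<in>true_nulls. fdp_summand p x)"
  proof (intro sum_mono)
    fix p assume "p \<in> true_nulls"
    then have "0 \<le> mat_of_rows b s x p"
      unfolding true_nulls_def by (auto simp: mat_of_rows_apply clamp01_bounds)
    then have "n0_loo (fst p) x * mat_of_rows b s x p \<le> n0hat (mat_of_rows b s x) * mat_of_rows b s x p"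
      by (intro mult_right_mono n0_loo_le)
    then show "(if n0hat (mat_of_rows b s x) * mat_of_rows b s x p \<le> real (cutoff x) * \<alpha>
                then 1 / real (cutoff x) else 0) \<le> fdp_summand p x"
      unfolding fdp_summand_def by auto
  qed
  finally show ?thesis unfolding x_def .
qed

lemma true_nullsD: "(i,j) \<in> true_nulls \<Longrightarrow> i < b \<and> j < s i \<and> truenull i j"
  unfolding true_nulls_def by simp

lemma prob_true_null_le: "(i,j) \<in> true_nulls \<Longrightarrow> 0 \<le> u \<Longrightarrow> u \<le> 1 \<Longrightarrow> prob {w \<in> space M. P i j w \<le> u} = u"
  using unif meas by (intro prob_le_uniform) (auto dest: true_nullsD)

lemma measurable_upd_row:
  assumes "i < b" "x \<in> space (PiM ({..<b} - {i}) row_space)"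
  shows "(\<lambda>y. x(i := y)) \<in> measurable (row_space i) (PiM {..<b} row_space)"
proof -
  have "{..<b} = insert i ({..<b} - {i})" using assms(1) by auto
  then show ?thesis using measurable_component_update[OF assms(2), of i] by simp
qed

lemma measurable_cutoff_upd_row:
  assumes "i < b" "x \<in> space (PiM ({..<b} - {i}) row_space)"
  shows "(\<lambda>w. cutoff (x(i := prow s P i w))) \<in> measurable M (count_space UNIV)"
  by (rule measurable_compose[OF measurable_prow[OF assms(1)]
        measurable_compose[OF measurable_upd_row[OF assms] measurable_cutoff]])

text \<open>This is where positive dependence within a row enters: \<open>[cutoff \<le> k]\<close> is a
  non-decreasing function of row \<open>i\<close>.\<close>
lemma cond_prob_cutoff_mono:
  assumes ij: "(i,j) \<in> true_nulls" and x: "x \<in> space (PiM ({..<b} - {i}) row_space)"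
  shows "mono_on {0<..<1} (cond_prob_le (\<lambda>w. cutoff (x(i := prow s P i w)) \<le> k) (P i j))"
proof -
  have i: "i < b" "j < s i" "truenull i j" using true_nullsD[OF ij] by auto
  define \<phi> where "\<phi> y = (if cutoff (x(i := y)) \<le> k then 1 else 0 :: real)" for y
  have \<phi>_meas: "\<phi> \<in> borel_measurable (row_space i)"
    using measurable_compose[OF measurable_upd_row[OF i(1) x] measurable_cutoff]
    unfolding \<phi>_def by measurable
  have "\<phi> y \<le> \<phi> y'" if "\<forall>l<s i. y l \<le> y' l" for y y'
  proof -
    have "cutoff (x(i := y')) \<le> cutoff (x(i := y))"
      using that by (intro cutoff_antimono) (auto simp: mat_of_rows_apply intro: clamp01_mono)
    then show ?thesis unfolding \<phi>_def by auto
  qed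
  moreover have "integrable M (\<lambda>w. \<phi> (prow s P i w))"
    using measurable_compose[OF measurable_prow[OF i(1)] \<phi>_meas]
    by (intro integrable_const_bound[where B=1]) (auto simp: \<phi>_def)
  ultimately have pd: "mono_on {0<..<1} (cexp_le M (\<lambda>w. \<phi> (prow s P i w)) (P i j))"
    using posdep i \<phi>_meas by blast
  have "{w \<in> space M. cutoff (x(i := prow s P i w)) \<le> k \<and> P i j w \<le> u} \<in> events" for u
  proof -
    note measurable_cutoff_upd_row[OF i(1) x, measurable]
    have [measurable]: "P i j \<in> borel_measurable M" using meas i by simp
    show ?thesis by measurable
  qed
  then have "cexp_le M (\<lambda>w. \<phi> (prow s P i w)) (P i j)
      = cond_prob_le (\<lambda>w. cutoff (x(i := prow s P i w)) \<le> k) (P i j)"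
    by (intro ext) (simp add: \<phi>_def cexp_le_indicator)
  with pd show ?thesis by simp
qed

lemma nn_integral_fdp_summand_row_le:
  assumes ij: "(i,j) \<in> true_nulls" and x: "x \<in> space (PiM ({..<b} - {i}) row_space)"
  shows "(\<integral>\<^sup>+w. ennreal (fdp_summand (i,j) (x(i := prow s P i w))) \<partial>M) \<le> ennreal (\<alpha> / n0_loo i x)"
proof -
  have i: "i < b" "j < s i" using true_nullsD[OF ij] by auto
  define D where "D w = cutoff (x(i := prow s P i w))" for w
  have "fdp_summand (i,j) (x(i := prow s P i w))
      = (if P i j w \<le> real (D w) * (\<alpha> / n0_loo i x) then 1 / real (D w) else 0)" if w: "w \<in> space M" for w
  proof -
    have "mat_of_rows b s (x(i := prow s P i w)) (i,j) = P i j w"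
      using i pval w by (simp add: mat_of_rows_apply prow_def clamp01_id)
    then show ?thesis
      unfolding fdp_summand_def D_def using n0_loo_pos[of i x]
      by (simp add: pos_le_divide_eq mult.commute)
  qed
  then have "(\<integral>\<^sup>+w. ennreal (fdp_summand (i,j) (x(i := prow s P i w))) \<partial>M)
      = (\<integral>\<^sup>+w. ennreal (if P i j w \<le> real (D w) * (\<alpha> / n0_loo i x) then 1 / real (D w) else 0) \<partial>M)"
    by (intro nn_integral_cong) simp
  also have "\<dots> \<le> ennreal (\<alpha> / n0_loo i x)"
  proof (rule step_up_indicator_bound)
    show "P i j \<in> borel_measurable M" "\<And>w. w \<in> space M \<Longrightarrow> 0 \<le> P i j w \<and> P i j w \<le> 1"
      using meas pval i by auto
    show "D \<in> measurable M (count_space UNIV)"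
      unfolding D_def by (rule measurable_cutoff_upd_row[OF i(1) x])
    show "\<And>w. 1 \<le> D w \<and> D w \<le> b" unfolding D_def using cutoff_bounds by blast
    show "0 < \<alpha> / n0_loo i x" using alpha_pos n0_loo_pos by simp
  qed (use prob_true_null_le[OF ij] cond_prob_cutoff_mono[OF ij x] in \<open>simp_all add: D_def\<close>)
  finally show ?thesis .
qed

lemma du_mat_le_mat_of_rows:
  assumes "w \<in> space M" "p \<in> idx b s"
  shows "du_mat b s truenull P i w p \<le> mat_of_rows b s ((row_tuple w)(i := (\<lambda>_. 0))) p"
  using assms pval by (cases p) (auto simp: du_mat_def mat_of_rows_apply row_tuple_def prow_def clamp01_id)

lemma du_mat_PiE: "w \<in> space M \<Longrightarrow> du_mat b s truenull P i w \<in> PiE (idx b s) (\<lambda>_. {0..1})"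
  unfolding du_mat_def using pval by (auto simp: PiE_iff idx_def)

lemma measurable_du_mat: "du_mat b s truenull P i \<in> measurable M (PiM (idx b s) (\<lambda>_. borel))"
  unfolding du_mat_def
proof (rule measurable_restrict)
  fix p assume "p \<in> idx b s"
  moreover obtain k l where "p = (k,l)" by (cases p)
  ultimately show "(\<lambda>w. case p of (k, l) \<Rightarrow> if k = i \<or> \<not> truenull k l then 0 else P k l w)
      \<in> borel_measurable M"
    using meas by (cases "k = i \<or> \<not> truenull k l") auto
qed

lemma nn_integral_fdp_summand_le:
  assumes ij: "(i,j) \<in> true_nulls"
  shows "(\<integral>\<^sup>+w. ennreal (fdp_summand (i,j) (row_tuple w)) \<partial>M)
           \<le> ennreal \<alpha> * (\<integral>\<^sup>+w. ennreal (1 / n0hat (du_mat b s truenull P i w)) \<partial>M)"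
proof -
  have i: "i < b" using true_nullsD[OF ij] by simp
  let ?\<Pi> = "PiM ({..<b} - {i}) row_law"
  have "(\<integral>\<^sup>+w. ennreal (fdp_summand (i,j) (row_tuple w)) \<partial>M)
      = (\<integral>\<^sup>+x. (\<integral>\<^sup>+w. ennreal (fdp_summand (i,j) (x(i := prow s P i w))) \<partial>M) \<partial>?\<Pi>)"
    using i by (intro nn_integral_row_tuple_split) measurable
  also have "\<dots> \<le> (\<integral>\<^sup>+x. ennreal (\<alpha> / n0_loo i x) \<partial>?\<Pi>)"
    using ij space_PiM_row_law[of "{..<b} - {i}"]
    by (intro nn_integral_mono nn_integral_fdp_summand_row_le) auto
  also have "\<dots> = (\<integral>\<^sup>+x. (\<integral>\<^sup>+w. ennreal (\<alpha> / n0_loo i (x(i := prow s P i w))) \<partial>M) \<partial>?\<Pi>)"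
    by (simp add: emeasure_space_1)
  also have "\<dots> = (\<integral>\<^sup>+w. ennreal (\<alpha> / n0_loo i (row_tuple w)) \<partial>M)"
    using i by (intro nn_integral_row_tuple_split[symmetric]) measurable
  also have "\<dots> \<le> (\<integral>\<^sup>+w. ennreal \<alpha> * ennreal (1 / n0hat (du_mat b s truenull P i w)) \<partial>M)"
  proof (intro nn_integral_mono)
    fix w assume w: "w \<in> space M"
    have du_pos: "0 < n0hat (du_mat b s truenull P i w)" using n0_pos du_mat_PiE[OF w] by blast
    have "n0hat (du_mat b s truenull P i w) \<le> n0_loo i (row_tuple w)"
      unfolding n0_loo_def using du_mat_le_mat_of_rows[OF w]
      by (intro n0hat_mono du_mat_PiE[OF w] mat_of_rows_PiE)
    then have "\<alpha> / n0_loo i (row_tuple w) \<le> \<alpha> * (1 / n0hat (du_mat b s truenull P i w))"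
      using du_pos alpha_pos by (simp add: frac_le)
    then show "ennreal (\<alpha> / n0_loo i (row_tuple w)) \<le> ennreal \<alpha> * ennreal (1 / n0hat (du_mat b s truenull P i w))"
      using alpha_pos du_pos by (simp add: ennreal_leI ennreal_mult[symmetric])
  qed
  also have "\<dots> = ennreal \<alpha> * (\<integral>\<^sup>+w. ennreal (1 / n0hat (du_mat b s truenull P i w)) \<partial>M)"
    using measurable_compose[OF measurable_du_mat n0_meas] by (intro nn_integral_cmult) simp
  finally show ?thesis .
qed

lemma sum_true_nulls:
  fixes f :: "nat \<Rightarrow> 'b::comm_semiring_1"
  shows "(\<Sum>p\<in>true_nulls. f (fst p)) = (\<Sum>i<b. \<Sum>j<s i. (if truenull i j then 1 else 0) * f i)"
proof -
  have "true_nulls = Sigma {..<b} (\<lambda>i. {j \<in> {..<s i}. truenull i j})"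
    unfolding true_nulls_def idx_def by auto
  then have "(\<Sum>p\<in>true_nulls. f (fst p)) = (\<Sum>i<b. \<Sum>j\<in>{j \<in> {..<s i}. truenull i j}. f i)"
    by (subst sum.Sigma) (auto simp: split_beta)
  also have "\<dots> = (\<Sum>i<b. \<Sum>j<s i. (if truenull i j then 1 else 0) * f i)"
  proof -
    have "(\<Sum>j\<in>{j \<in> {..<s i}. truenull i j}. f i) = (\<Sum>j<s i. if truenull i j then f i else 0)" for i
      by (rule sum.inter_filter[OF finite_lessThan])
    then show ?thesis by (auto intro!: sum.cong)
  qed
  finally show ?thesis .
qed

lemma abh_fdr_le:
  assumes n0_du: "(\<Sum>i<b. \<Sum>j<s i. (if truenull i j then 1 else 0) *
                   (\<integral>\<^sup>+ w. ennreal (1 / n0hat (du_mat b s truenull P i w)) \<partial>M)) \<le> 1"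
  shows "abh_fdr M b s truenull \<alpha> n0hat P \<le> \<alpha>"
proof -
  let ?G = "\<lambda>i. \<integral>\<^sup>+ w. ennreal (1 / n0hat (du_mat b s truenull P i w)) \<partial>M"
  have "(\<integral>\<^sup>+w. ennreal (fdp w) \<partial>M) \<le> (\<integral>\<^sup>+w. (\<Sum>p\<in>true_nulls. ennreal (fdp_summand p (row_tuple w))) \<partial>M)"
    using fdp_le_sum_fdp_summand
    by (intro nn_integral_mono) (simp add: ennreal_leI sum_ennreal fdp_summand_def)
  also have "\<dots> = (\<Sum>p\<in>true_nulls. \<integral>\<^sup>+w. ennreal (fdp_summand p (row_tuple w)) \<partial>M)"
    by (intro nn_integral_sum) measurable
  also have "\<dots> \<le> (\<Sum>p\<in>true_nulls. ennreal \<alpha> * ?G (fst p))"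
    using nn_integral_fdp_summand_le by (intro sum_mono) auto
  also have "\<dots> = ennreal \<alpha> * (\<Sum>i<b. \<Sum>j<s i. (if truenull i j then 1 else 0) * ?G i)"
    by (simp only: sum_distrib_left[symmetric] sum_true_nulls[of ?G])
  also have "\<dots> \<le> ennreal \<alpha>" using mult_left_mono[OF n0_du] by simp
  finally have "(\<integral>w. fdp w \<partial>M) \<le> \<alpha>" using alpha_pos by (intro integral_real_bounded) auto
  then show ?thesis unfolding abh_fdr_def fdp_def .
qed

end

theorem theorem1:
  fixes M :: "'a measure" and b :: nat and s :: "nat \<Rightarrow> nat"
    and P :: "nat \<Rightarrow> nat \<Rightarrow> 'a \<Rightarrow> real"
    and truenull :: "nat \<Rightarrow> nat \<Rightarrow> bool"
    and n0hat :: "(nat \<times> nat \<Rightarrow> real) \<Rightarrow> real"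
    and \<alpha> :: real
  assumes M: "prob_space M"
    and b: "b \<ge> 1" and s: "\<forall>i<b. s i \<ge> 1"
    and alpha: "0 < \<alpha>" "\<alpha> < 1"
    and meas: "\<forall>i<b. \<forall>j<s i. P i j \<in> borel_measurable M"
    and pval: "\<forall>w\<in>space M. \<forall>i<b. \<forall>j<s i. 0 \<le> P i j w \<and> P i j w \<le> 1"
    and unif: "\<forall>i<b. \<forall>j<s i. truenull i j \<longrightarrow>
                 distr M lborel (P i j) = uniform_measure lborel {0..1}"
    and indep: "prob_space.indep_vars M (\<lambda>i. PiM {..<s i} (\<lambda>_. borel)) (prow s P) {..<b}"
    and posdep: "\<forall>i<b. \<forall>j<s i. truenull i j \<longrightarrow>
                 (\<forall>\<phi> :: (nat \<Rightarrow> real) \<Rightarrow> real.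
                    \<phi> \<in> borel_measurable (PiM {..<s i} (\<lambda>_. borel)) \<longrightarrow>
                    (\<forall>x y. (\<forall>k<s i. x k \<le> y k) \<longrightarrow> \<phi> x \<le> \<phi> y) \<longrightarrow>
                    integrable M (\<lambda>w. \<phi> (prow s P i w)) \<longrightarrow>
                    mono_on {0<..<1} (cexp_le M (\<lambda>w. \<phi> (prow s P i w)) (P i j)))"
    and n0_meas: "n0hat \<in> borel_measurable (PiM (idx b s) (\<lambda>_. borel))"
    and n0_pos: "\<forall>X\<in>PiE (idx b s) (\<lambda>_. {0..1}). n0hat X > 0"
    and n0_mono: "\<forall>X\<in>PiE (idx b s) (\<lambda>_. {0..1}). \<forall>(i,j)\<in>idx b s. \<forall>t.
                    X (i,j) \<le> t \<and> t \<le> 1 \<longrightarrow> n0hat X \<le> n0hat (X((i,j) := t))"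
    and n0_du: "(\<Sum>i<b. \<Sum>j<s i. (if truenull i j then 1 else 0) *
                   (\<integral>\<^sup>+ w. ennreal (1 / n0hat (du_mat b s truenull P i w)) \<partial>M)) \<le> 1"
  shows "abh_fdr M b s truenull \<alpha> n0hat P \<le> \<alpha>"
proof -
  interpret adaptive_bh M b s P truenull n0hat \<alpha>
    using M b s alpha(1) meas pval unif indep posdep n0_meas n0_pos n0_mono
    by (simp add: adaptive_bh_def adaptive_bh_axioms_def)
  show ?thesis by (rule abh_fdr_le[OF n0_du])
qed

end
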